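(* Let $(a_n)_{n\ge 1}$ be a sequence of strictly positive real numbers with $\sum_{n\ge1}(1+n^2)^5a_n^2<\infty$. Let $H=\mathbb{R}\times l^2\times l^2$ and let $F:H\to H$ be defined, for $y=(x,(u_n)_{n\ge1},(v_n)_{n\ge1})\in H$, by $$F(y)=\Big(\sum_{n\ge1} n a_n^{1/2}\big(\sin(nx)u_n+\cos(nx)v_n\big),\ \big(a_n^{1/2}\cos(nx)\big)_{n\ge1},\ \big(-a_n^{1/2}\sin(nx)\big)_{n\ge1}\Big).$$ Let $W$ be a cylindrical Wiener process on $H$ and $\sigma$ the projection onto the first coordinate. For $z\in H$ let $Y(t,z)$ denote the unique strong solution of $dY_t=F(Y_t)\,dt+\sigma\,dW_t$, $Y_0=z$. Let $(y_k)_{k\in\mathbb{N}}$ be a sequence in $H$ with $y_k\to y$ in $H$, and write $Y_k(t)=Y(t,y_k)$, $Y(t)=Y(t,y)$ (all driven by the same $W$). Then for every $t>0$, $$\|Y_k(t)-Y(t)\|_H^2\to0\quad\text{as }k\to\infty.$$ In particular $(Y_t)_{t\ge0}$ is a Feller process: the transition semigroup $P_t\varphi(z)=\mathbb{E}[\varphi(Y(t,z))]$ maps bounded continuous functions on $H$ into bounded continuous functions on $H$.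
   Context: $H=\mathbb{R}\times l^2\times l^2$ is the Hilbert space with norm $\|y\|_H^2=|x|^2+\|(u_n)_n\|_{l^2}^2+\|(v_n)_n\|_{l^2}^2$. Existence and uniqueness of a strong solution $Y(\cdot,z)\in C([0,\infty);H)$ for each $z\in H$ is known. $\sigma W_t=(\beta_t,0,0)$ with $\beta$ a standard one-dimensional Brownian motion. *)

theory Defs
  imports "HOL-Probability.Probability"
begin

text \<open>The Hilbert space H = R x l2 x l2. Sequences (u_n) with n >= 1 are represented by
  functions u :: nat => real with u k standing for u_(k+1) (0-based re-indexing).\<close>

type_synonym H = "real \<times> (nat \<Rightarrow> real) \<times> (nat \<Rightarrow> real)"

definition in_l2 :: "(nat \<Rightarrow> real) \<Rightarrow> bool" where
  "in_l2 u \<longleftrightarrow> summable (\<lambda>k. (u k)\<^sup>2)"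

definition inH :: "H \<Rightarrow> bool" where
  "inH y \<longleftrightarrow> in_l2 (fst (snd y)) \<and> in_l2 (snd (snd y))"

definition distH :: "H \<Rightarrow> H \<Rightarrow> real" where
  "distH y z = sqrt ((fst y - fst z)\<^sup>2
                    + (\<Sum>k. (fst (snd y) k - fst (snd z) k)\<^sup>2)
                    + (\<Sum>k. (snd (snd y) k - snd (snd z) k)\<^sup>2))"

text \<open>The drift F; a k stands for a_(k+1), so the factor n is real (Suc k).\<close>
definition driftF :: "(nat \<Rightarrow> real) \<Rightarrow> H \<Rightarrow> H" where
  "driftF a y = (let x = fst y; u = fst (snd y); v = snd (snd y) in
     ((\<Sum>k. real (Suc k) * sqrt (a k) *
              (sin (real (Suc k) * x) * u k + cos (real (Suc k) * x) * v k)),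
      (\<lambda>k. sqrt (a k) * cos (real (Suc k) * x)),
      (\<lambda>k. - sqrt (a k) * sin (real (Suc k) * x))))"

definition path_contH :: "(real \<Rightarrow> H) \<Rightarrow> bool" where
  "path_contH p \<longleftrightarrow> (\<forall>t\<ge>0. \<forall>e>0. \<exists>d>0. \<forall>s\<ge>0. \<bar>s - t\<bar> < d \<longrightarrow> distH (p s) (p t) < e)"

definition contH :: "(H \<Rightarrow> real) \<Rightarrow> bool" where
  "contH f \<longleftrightarrow> (\<forall>y. inH y \<longrightarrow> (\<forall>e>0. \<exists>d>0. \<forall>y'. inH y' \<and> distH y' y < d \<longrightarrow> \<bar>f y' - f y\<bar> < e))"

definition boundedH :: "(H \<Rightarrow> real) \<Rightarrow> bool" where
  "boundedH f \<longleftrightarrow> (\<exists>B. \<forall>y. inH y \<longrightarrow> \<bar>f y\<bar> \<le> B)"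

definition std_brownian_motion :: "'w measure \<Rightarrow> (real \<Rightarrow> 'w \<Rightarrow> real) \<Rightarrow> bool" where
  "std_brownian_motion M \<beta> \<longleftrightarrow>
     prob_space M \<and>
     (\<forall>t. \<beta> t \<in> borel_measurable M) \<and>
     (\<forall>\<omega>\<in>space M. \<beta> 0 \<omega> = 0 \<and> continuous_on {0..} (\<lambda>t. \<beta> t \<omega>)) \<and>
     (\<forall>s t. 0 \<le> s \<and> s < t \<longrightarrow>
        distributed M lborel (\<lambda>\<omega>. \<beta> t \<omega> - \<beta> s \<omega>)
          (\<lambda>x. ennreal (normal_density 0 (sqrt (t - s)) x))) \<and>
     (\<forall>(ts :: nat \<Rightarrow> real) n. 0 \<le> ts 0 \<and> (\<forall>i<n. ts i < ts (Suc i)) \<longrightarrow>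
        prob_space.indep_vars M (\<lambda>_. borel) (\<lambda>i \<omega>. \<beta> (ts (Suc i)) \<omega> - \<beta> (ts i) \<omega>) {..<n})"

text \<open>Strong solution of dY = F(Y) dt + sigma dW, Y_0 = z, where sigma W_t = (beta_t, 0, 0).
  The H-valued time integral is written componentwise.\<close>
definition strong_solution ::
  "'w measure \<Rightarrow> (real \<Rightarrow> 'w \<Rightarrow> real) \<Rightarrow> (nat \<Rightarrow> real) \<Rightarrow> H \<Rightarrow> (real \<Rightarrow> 'w \<Rightarrow> H) \<Rightarrow> bool" where
  "strong_solution M \<beta> a z Y \<longleftrightarrow>
     (\<forall>t\<ge>0. \<forall>\<omega>\<in>space M. inH (Y t \<omega>)) \<and>
     (\<forall>t\<ge>0. (\<lambda>\<omega>. fst (Y t \<omega>)) \<in> borel_measurable M \<and>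
             (\<forall>k. (\<lambda>\<omega>. fst (snd (Y t \<omega>)) k) \<in> borel_measurable M) \<and>
             (\<forall>k. (\<lambda>\<omega>. snd (snd (Y t \<omega>)) k) \<in> borel_measurable M)) \<and>
     (AE \<omega> in M.
        path_contH (\<lambda>t. Y t \<omega>) \<and>
        (\<forall>t\<ge>0.
           fst (Y t \<omega>) = fst z + integral {0..t} (\<lambda>s. fst (driftF a (Y s \<omega>))) + \<beta> t \<omega> \<and>
           (\<forall>k. fst (snd (Y t \<omega>)) k
                  = fst (snd z) k + integral {0..t} (\<lambda>s. fst (snd (driftF a (Y s \<omega>))) k)) \<and>
           (\<forall>k. snd (snd (Y t \<omega>)) k
                  = snd (snd z) k + integral {0..t} (\<lambda>s. snd (snd (driftF a (Y s \<omega>))) k))))"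

end

theory Submission
  imports Defs
begin

(* Two solutions driven by the same Brownian path differ by a quantity in which the noise cancels,
  so the whole argument is pathwise. The u- and v-components of the drift are bounded by
  a_n^(1/2) and 1-Lipschitz in n x: this bounds the l2 norms of a solution linearly in time and
  controls the u,v-differences of two solutions by their integrated x-difference. The x-component
  of the drift is Lipschitz on H with a constant affine in the l2 norms of u and v, because
  sum n^4 a_n is finite, which follows from the hypothesis by AM-GM. Gronwall's inequality then
  makes Y(t, z) Lipschitz in z along every Brownian path, and the Feller property follows by
  dominated convergence. *)

abbreviation hx :: "H \<Rightarrow> real" where "hx p \<equiv> fst p"
abbreviation hu :: "H \<Rightarrow> nat \<Rightarrow> real" where "hu p \<equiv> fst (snd p)"
abbreviation hv :: "H \<Rightarrow> nat \<Rightarrow> real" where "hv p \<equiv> snd (snd p)"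

section \<open>Square-summable sequences\<close>

definition l2_norm :: "(nat \<Rightarrow> real) \<Rightarrow> real" where
  "l2_norm f = sqrt (\<Sum>k. (f k)\<^sup>2)"

lemma l2_norm_nonneg: "in_l2 f \<Longrightarrow> 0 \<le> l2_norm f"
  unfolding l2_norm_def in_l2_def by (simp add: suminf_nonneg)

lemma power2_l2_norm: "in_l2 f \<Longrightarrow> (l2_norm f)\<^sup>2 = (\<Sum>k. (f k)\<^sup>2)"
  unfolding l2_norm_def in_l2_def by (simp add: suminf_nonneg)

lemma L2_set_le_l2_norm: "in_l2 f \<Longrightarrow> L2_set f {..<n} \<le> l2_norm f"
  unfolding L2_set_def l2_norm_def in_l2_def by (intro real_sqrt_le_mono sum_le_suminf) auto

lemma l2_norm_le_if_L2_set_le: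
  assumes "in_l2 f" and "\<And>n. L2_set f {..<n} \<le> c"
  shows "l2_norm f \<le> c"
proof -
  have c: "0 \<le> c" using assms(2)[of 0] by simp
  have "(\<Sum>k<n. (f k)\<^sup>2) \<le> c\<^sup>2" for n
    using assms(2)[of n] c by (simp add: L2_set_def real_sqrt_le_iff sqrt_le_D)
  then have "(\<Sum>k. (f k)\<^sup>2) \<le> c\<^sup>2"
    using assms(1) unfolding in_l2_def by (intro suminf_le_const) auto
  then show ?thesis unfolding l2_norm_def using c by (simp add: real_sqrt_le_iff real_le_lsqrt)
qed

lemma in_l2_dominated:
  assumes "in_l2 g" "in_l2 h" "\<And>k. \<bar>f k\<bar> \<le> \<bar>g k\<bar> + \<bar>h k\<bar>"
  shows "in_l2 f"
proof -
  have bound: "(f k)\<^sup>2 \<le> 2 * (g k)\<^sup>2 + 2 * (h k)\<^sup>2" for k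
  proof -
    have "(f k)\<^sup>2 \<le> (\<bar>g k\<bar> + \<bar>h k\<bar>)\<^sup>2"
      using assms(3)[of k] by (metis abs_ge_zero abs_le_square_iff abs_of_nonneg add_nonneg_nonneg)
    then show ?thesis using sum_squares_bound[of "\<bar>g k\<bar>" "\<bar>h k\<bar>"] by (simp add: power2_sum)
  qed
  have sum: "summable (\<lambda>k. 2 * (g k)\<^sup>2 + 2 * (h k)\<^sup>2)"
    using assms(1,2) unfolding in_l2_def by (intro summable_add summable_mult)
  show ?thesis
    unfolding in_l2_def by (rule summable_comparison_test'[OF sum, where N = 0]) (simp add: bound)
qed

lemma l2_norm_dominated:
  assumes "in_l2 g" "in_l2 h" "\<And>k. \<bar>f k\<bar> \<le> \<bar>g k\<bar> + \<bar>h k\<bar>"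
  shows "l2_norm f \<le> l2_norm g + l2_norm h"
proof (rule l2_norm_le_if_L2_set_le[OF in_l2_dominated[OF assms]])
  fix n
  have "L2_set f {..<n} = L2_set (\<lambda>k. \<bar>f k\<bar>) {..<n}"
    by (simp add: L2_set_def)
  also have "\<dots> \<le> L2_set (\<lambda>k. \<bar>g k\<bar> + \<bar>h k\<bar>) {..<n}"
    using assms(3) by (intro L2_set_mono) auto
  also have "\<dots> \<le> L2_set (\<lambda>k. \<bar>g k\<bar>) {..<n} + L2_set (\<lambda>k. \<bar>h k\<bar>) {..<n}"
    by (rule L2_set_triangle_ineq)
  also have "\<dots> = L2_set g {..<n} + L2_set h {..<n}"
    by (simp add: L2_set_def)
  also have "\<dots> \<le> l2_norm g + l2_norm h"
    using assms(1,2) by (intro add_mono L2_set_le_l2_norm)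
  finally show "L2_set f {..<n} \<le> l2_norm g + l2_norm h" .
qed

lemma in_l2_diff: "in_l2 f \<Longrightarrow> in_l2 g \<Longrightarrow> in_l2 (\<lambda>k. f k - g k)"
  by (rule in_l2_dominated[of f g]) auto

lemma in_l2_cmult: "in_l2 f \<Longrightarrow> in_l2 (\<lambda>k. c * f k)"
  unfolding in_l2_def by (simp add: power_mult_distrib summable_mult)

lemma l2_norm_cmult: "in_l2 f \<Longrightarrow> l2_norm (\<lambda>k. c * f k) = \<bar>c\<bar> * l2_norm f"
  unfolding in_l2_def l2_norm_def by (simp add: power_mult_distrib suminf_mult real_sqrt_mult)

lemma
  assumes "in_l2 f" "in_l2 g"
  shows summable_abs_mult_if_in_l2: "summable (\<lambda>k. \<bar>f k\<bar> * \<bar>g k\<bar>)"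
    and suminf_abs_mult_le_l2_norm: "(\<Sum>k. \<bar>f k\<bar> * \<bar>g k\<bar>) \<le> l2_norm f * l2_norm g"
proof -
  have bound: "\<bar>f k\<bar> * \<bar>g k\<bar> \<le> (f k)\<^sup>2 + (g k)\<^sup>2" for k
  proof -
    have "2 * (\<bar>f k\<bar> * \<bar>g k\<bar>) \<le> (f k)\<^sup>2 + (g k)\<^sup>2"
      using sum_squares_bound[of "\<bar>f k\<bar>" "\<bar>g k\<bar>"] by (simp add: mult.assoc)
    moreover have "0 \<le> \<bar>f k\<bar> * \<bar>g k\<bar>" by simp
    ultimately show ?thesis by linarith
  qed
  have "summable (\<lambda>k. (f k)\<^sup>2 + (g k)\<^sup>2)"
    using assms unfolding in_l2_def by (rule summable_add)
  then show sum: "summable (\<lambda>k. \<bar>f k\<bar> * \<bar>g k\<bar>)"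
    by (rule summable_comparison_test'[where N = 0]) (simp add: bound)
  show "(\<Sum>k. \<bar>f k\<bar> * \<bar>g k\<bar>) \<le> l2_norm f * l2_norm g"
  proof (rule suminf_le_const[OF sum])
    fix n
    have "(\<Sum>k<n. \<bar>f k\<bar> * \<bar>g k\<bar>) \<le> L2_set f {..<n} * L2_set g {..<n}"
      by (rule L2_set_mult_ineq)
    also have "\<dots> \<le> l2_norm f * l2_norm g"
      using assms by (intro mult_mono L2_set_le_l2_norm l2_norm_nonneg) auto
    finally show "(\<Sum>k<n. \<bar>f k\<bar> * \<bar>g k\<bar>) \<le> l2_norm f * l2_norm g" .
  qed
qed

lemma in_l2_hu_diff: "inH p \<Longrightarrow> inH q \<Longrightarrow> in_l2 (\<lambda>k. hu p k - hu q k)"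
  and in_l2_hv_diff: "inH p \<Longrightarrow> inH q \<Longrightarrow> in_l2 (\<lambda>k. hv p k - hv q k)"
  unfolding inH_def by (auto intro: in_l2_diff)

lemma distH_eq_l2_norm:
  assumes "inH p" "inH q"
  shows "distH p q = sqrt ((hx p - hx q)\<^sup>2 + (l2_norm (\<lambda>k. hu p k - hu q k))\<^sup>2
                                         + (l2_norm (\<lambda>k. hv p k - hv q k))\<^sup>2)"
  using assms unfolding distH_def by (simp add: power2_l2_norm in_l2_hu_diff in_l2_hv_diff)

lemma
  assumes "inH p" "inH q"
  shows abs_hx_diff_le_distH: "\<bar>hx p - hx q\<bar> \<le> distH p q"
    and l2_norm_hu_diff_le_distH: "l2_norm (\<lambda>k. hu p k - hu q k) \<le> distH p q"
    and l2_norm_hv_diff_le_distH: "l2_norm (\<lambda>k. hv p k - hv q k) \<le> distH p q"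
    and distH_le_sum: "distH p q \<le> \<bar>hx p - hx q\<bar> + l2_norm (\<lambda>k. hu p k - hu q k)
                                                  + l2_norm (\<lambda>k. hv p k - hv q k)"
proof -
  let ?x = "\<bar>hx p - hx q\<bar>" and ?u = "l2_norm (\<lambda>k. hu p k - hu q k)"
    and ?v = "l2_norm (\<lambda>k. hv p k - hv q k)"
  have d: "distH p q = sqrt (?x\<^sup>2 + ?u\<^sup>2 + ?v\<^sup>2)"
    using distH_eq_l2_norm[OF assms] by simp
  show "?x \<le> distH p q" "?u \<le> distH p q" "?v \<le> distH p q"
    unfolding d by (auto intro: real_le_rsqrt)
  have "0 \<le> ?u" "0 \<le> ?v"
    using assms by (auto intro: l2_norm_nonneg in_l2_hu_diff in_l2_hv_diff)
  then have "?x\<^sup>2 + ?u\<^sup>2 + ?v\<^sup>2 \<le> (?x + ?u + ?v)\<^sup>2"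
    by (simp add: power2_sum)
  then show "distH p q \<le> ?x + ?u + ?v"
    unfolding d using \<open>0 \<le> ?u\<close> \<open>0 \<le> ?v\<close> by (simp add: real_sqrt_le_iff real_le_lsqrt)
qed

lemma distH_nonneg: "inH p \<Longrightarrow> inH q \<Longrightarrow> 0 \<le> distH p q"
  by (simp add: distH_eq_l2_norm)

lemma distH_commute: "distH p q = distH q p"
  unfolding distH_def by (simp add: power2_commute)

section \<open>The drift\<close>

lemma summable_pow4_mult_if_summable_weighted_squares:
  fixes a :: "nat \<Rightarrow> real"
  assumes nonneg: "\<And>k. 0 \<le> a k"
    and summable: "summable (\<lambda>k. (1 + (real (Suc k))\<^sup>2) ^ 5 * (a k)\<^sup>2)"
  shows "summable (\<lambda>k. real (Suc k) ^ 4 * a k)"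
proof -
  have "summable (\<lambda>k. inverse (real (Suc k) ^ 2))"
    using inverse_power_summable[of 2, where 'a = real] summable_Suc_iff[of "\<lambda>n. inverse (real n ^ 2)"]
    by simp
  then have sum: "summable (\<lambda>k. (1 + (real (Suc k))\<^sup>2) ^ 5 * (a k)\<^sup>2 + inverse (real (Suc k) ^ 2))"
    using summable by (rule summable_add[rotated])
  have "real (Suc k) ^ 4 * a k \<le> (1 + (real (Suc k))\<^sup>2) ^ 5 * (a k)\<^sup>2 + inverse (real (Suc k) ^ 2)" for k
  proof -
    define n where "n = real (Suc k)"
    have n: "1 \<le> n" by (simp add: n_def)
    \<comment> \<open>AM-GM for \<open>n^4 a = (n^5 a) * n^-1\<close>\<close>
    have "n ^ 4 * a k = (n ^ 5 * a k) * inverse n"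
      using n by (simp add: field_simps eval_nat_numeral)
    also have "\<dots> \<le> (n ^ 5 * a k)\<^sup>2 + (inverse n)\<^sup>2"
    proof -
      have "2 * (n ^ 5 * a k * inverse n) \<le> (n ^ 5 * a k)\<^sup>2 + (inverse n)\<^sup>2"
        using sum_squares_bound[of "n ^ 5 * a k" "inverse n"] by (simp add: mult.assoc)
      moreover have "0 \<le> n ^ 5 * a k * inverse n" using n nonneg[of k] by simp
      ultimately show ?thesis by linarith
    qed
    also have "(n ^ 5 * a k)\<^sup>2 = (n\<^sup>2) ^ 5 * (a k)\<^sup>2"
      by (simp add: power_mult_distrib flip: power_mult)
    also have "\<dots> \<le> (1 + n\<^sup>2) ^ 5 * (a k)\<^sup>2"
      by (intro mult_right_mono power_mono) auto
    finally show ?thesis by (simp add: n_def power_inverse)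
  qed
  then show ?thesis
    using nonneg by (intro summable_comparison_test'[OF sum, where N = 0]) simp
qed

lemma abs_sin_diff_le: "\<bar>sin x - sin y\<bar> \<le> \<bar>x - (y::real)\<bar>"
proof -
  have "\<bar>sin x - sin y\<bar> = 2 * \<bar>sin ((x - y) / 2)\<bar> * \<bar>cos ((x + y) / 2)\<bar>"
    by (simp add: sin_diff_sin abs_mult)
  also have "\<dots> \<le> 2 * \<bar>(x - y) / 2\<bar> * 1"
    by (intro mult_mono abs_sin_x_le_abs_x) auto
  finally show ?thesis by simp
qed

lemma abs_cos_diff_le: "\<bar>cos x - cos y\<bar> \<le> \<bar>x - (y::real)\<bar>"
proof -
  have "\<bar>cos x - cos y\<bar> = 2 * \<bar>sin ((x + y) / 2)\<bar> * \<bar>sin ((y - x) / 2)\<bar>"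
    by (simp add: cos_diff_cos abs_mult)
  also have "\<dots> \<le> 2 * 1 * \<bar>(y - x) / 2\<bar>"
    by (intro mult_mono abs_sin_x_le_abs_x) auto
  finally show ?thesis by simp
qed

lemma hu_driftF: "hu (driftF a p) k = sqrt (a k) * cos (real (Suc k) * hx p)"
  and hv_driftF: "hv (driftF a p) k = - sqrt (a k) * sin (real (Suc k) * hx p)"
  by (simp_all add: driftF_def Let_def)

locale drift_coeffs =
  fixes a :: "nat \<Rightarrow> real"
  assumes nonneg: "\<And>k. 0 \<le> a k"
    and summable_pow4_mult: "summable (\<lambda>k. real (Suc k) ^ 4 * a k)"
begin

definition weight :: "nat \<Rightarrow> nat \<Rightarrow> real" where
  "weight j k = real (Suc k) ^ j * sqrt (a k)"

definition wnorm :: "nat \<Rightarrow> real" where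
  "wnorm j = l2_norm (weight j)"

lemma weight_nonneg: "0 \<le> weight j k"
  unfolding weight_def using nonneg by simp

lemma abs_weight [simp]: "\<bar>weight j k\<bar> = weight j k"
  using weight_nonneg by simp

lemma in_l2_weight:
  assumes "j \<le> 2" shows "in_l2 (weight j)"
proof -
  have "(weight j k)\<^sup>2 \<le> real (Suc k) ^ 4 * a k" for k
  proof -
    have "(weight j k)\<^sup>2 = real (Suc k) ^ (j * 2) * a k"
      using nonneg by (simp add: weight_def power_mult_distrib power_mult)
    also have "\<dots> \<le> real (Suc k) ^ 4 * a k"
      using assms nonneg by (intro mult_right_mono power_increasing) auto
    finally show ?thesis .
  qed
  then show ?thesis
    unfolding in_l2_def by (intro summable_comparison_test'[OF summable_pow4_mult, where N = 0]) simp
qed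

lemma wnorm_nonneg: "j \<le> 2 \<Longrightarrow> 0 \<le> wnorm j"
  unfolding wnorm_def by (rule l2_norm_nonneg[OF in_l2_weight])

definition drift_term :: "H \<Rightarrow> nat \<Rightarrow> real" where
  "drift_term p k = weight 1 k * (sin (real (Suc k) * hx p) * hu p k + cos (real (Suc k) * hx p) * hv p k)"

lemma hx_driftF: "hx (driftF a p) = (\<Sum>k. drift_term p k)"
  by (simp add: driftF_def Let_def drift_term_def weight_def)

lemma abs_drift_term_le: "\<bar>drift_term p k\<bar> \<le> weight 1 k * \<bar>hu p k\<bar> + weight 1 k * \<bar>hv p k\<bar>"
proof -
  have "\<bar>sin (real (Suc k) * hx p) * hu p k + cos (real (Suc k) * hx p) * hv p k\<bar> \<le> \<bar>hu p k\<bar> + \<bar>hv p k\<bar>"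
    by (rule order_trans[OF abs_triangle_ineq add_mono]) (auto simp: abs_mult intro: mult_left_le_one_le)
  then show ?thesis
    unfolding drift_term_def abs_mult using weight_nonneg[of 1 k]
    by (simp add: distrib_left[symmetric] mult_left_mono)
qed

lemma summable_drift_term:
  assumes "inH p" shows "summable (drift_term p)"
proof -
  have "summable (\<lambda>k. weight 1 k * \<bar>hu p k\<bar> + weight 1 k * \<bar>hv p k\<bar>)"
    using assms unfolding inH_def
    by (intro summable_add summable_abs_mult_if_in_l2[OF in_l2_weight, simplified]) auto
  then show ?thesis
    by (rule summable_comparison_test'[where N = 0]) (simp only: real_norm_def abs_drift_term_le)
qed

lemma abs_drift_term_diff_le:
  "\<bar>drift_term p k - drift_term q k\<bar>
     \<le> \<bar>hx p - hx q\<bar> * (weight 2 k * \<bar>hu p k\<bar> + weight 2 k * \<bar>hv p k\<bar>)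
       + weight 1 k * \<bar>hu p k - hu q k\<bar> + weight 1 k * \<bar>hv p k - hv q k\<bar>"
proof -
  define n where "n = real (Suc k)"
  define dx where "dx = \<bar>hx p - hx q\<bar>"
  have n: "0 \<le> n" by (simp add: n_def)
  have sin_lip: "\<bar>sin (n * hx p) - sin (n * hx q)\<bar> \<le> n * dx"
    and cos_lip: "\<bar>cos (n * hx p) - cos (n * hx q)\<bar> \<le> n * dx"
    using abs_sin_diff_le[of "n * hx p" "n * hx q"] abs_cos_diff_le[of "n * hx p" "n * hx q"] n
    by (simp_all add: dx_def abs_mult flip: right_diff_distrib)
  have "\<bar>(sin (n * hx p) - sin (n * hx q)) * hu p k + sin (n * hx q) * (hu p k - hu q k)
         + (cos (n * hx p) - cos (n * hx q)) * hv p k + cos (n * hx q) * (hv p k - hv q k)\<bar>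
      \<le> \<bar>(sin (n * hx p) - sin (n * hx q)) * hu p k\<bar> + \<bar>sin (n * hx q) * (hu p k - hu q k)\<bar>
         + \<bar>(cos (n * hx p) - cos (n * hx q)) * hv p k\<bar> + \<bar>cos (n * hx q) * (hv p k - hv q k)\<bar>"
    by (intro order_trans[OF abs_triangle_ineq] add_right_mono) auto
  also have "\<dots> \<le> n * dx * \<bar>hu p k\<bar> + \<bar>hu p k - hu q k\<bar> + n * dx * \<bar>hv p k\<bar> + \<bar>hv p k - hv q k\<bar>"
    unfolding abs_mult using sin_lip cos_lip
    by (intro add_mono mult_right_mono mult_left_le_one_le) auto
  finally have inner: "\<bar>(sin (n * hx p) - sin (n * hx q)) * hu p k + sin (n * hx q) * (hu p k - hu q k)
         + (cos (n * hx p) - cos (n * hx q)) * hv p k + cos (n * hx q) * (hv p k - hv q k)\<bar>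
      \<le> n * dx * \<bar>hu p k\<bar> + \<bar>hu p k - hu q k\<bar> + n * dx * \<bar>hv p k\<bar> + \<bar>hv p k - hv q k\<bar>" .
  have eq: "drift_term p k - drift_term q k = weight 1 k *
          ((sin (n * hx p) - sin (n * hx q)) * hu p k + sin (n * hx q) * (hu p k - hu q k)
         + (cos (n * hx p) - cos (n * hx q)) * hv p k + cos (n * hx q) * (hv p k - hv q k))"
    by (simp add: drift_term_def n_def algebra_simps)
  have "\<bar>drift_term p k - drift_term q k\<bar>
      \<le> weight 1 k * (n * dx * \<bar>hu p k\<bar> + \<bar>hu p k - hu q k\<bar> + n * dx * \<bar>hv p k\<bar> + \<bar>hv p k - hv q k\<bar>)"
    unfolding eq abs_mult abs_weight by (intro mult_left_mono inner weight_nonneg)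
  also have "\<dots> = dx * (weight 2 k * \<bar>hu p k\<bar> + weight 2 k * \<bar>hv p k\<bar>)
       + weight 1 k * \<bar>hu p k - hu q k\<bar> + weight 1 k * \<bar>hv p k - hv q k\<bar>"
    by (simp add: weight_def n_def power2_eq_square algebra_simps)
  finally show ?thesis by (simp add: dx_def)
qed

lemma abs_hx_driftF_diff_le:
  assumes p: "inH p" and q: "inH q"
  shows "\<bar>hx (driftF a p) - hx (driftF a q)\<bar>
           \<le> (wnorm 2 * (l2_norm (hu p) + l2_norm (hv p)) + 2 * wnorm 1) * distH p q"
proof -
  have u: "in_l2 (hu p)" and v: "in_l2 (hv p)" using p by (auto simp: inH_def)
  note du = in_l2_hu_diff[OF p q] and dv = in_l2_hv_diff[OF p q]
  note w1 = in_l2_weight[of 1] and w2 = in_l2_weight[of 2]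
  define dx where "dx = \<bar>hx p - hx q\<bar>"
  define M where "M k = dx * (weight 2 k * \<bar>hu p k\<bar> + weight 2 k * \<bar>hv p k\<bar>)
       + weight 1 k * \<bar>hu p k - hu q k\<bar> + weight 1 k * \<bar>hv p k - hv q k\<bar>" for k
  have M_sums: "M sums (dx * ((\<Sum>k. weight 2 k * \<bar>hu p k\<bar>) + (\<Sum>k. weight 2 k * \<bar>hv p k\<bar>))
                 + (\<Sum>k. weight 1 k * \<bar>hu p k - hu q k\<bar>) + (\<Sum>k. weight 1 k * \<bar>hv p k - hv q k\<bar>))"
    unfolding M_def
    using summable_abs_mult_if_in_l2[OF w2 u] summable_abs_mult_if_in_l2[OF w2 v]
      summable_abs_mult_if_in_l2[OF w1 du] summable_abs_mult_if_in_l2[OF w1 dv]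
    by (intro sums_add sums_mult summable_sums) simp_all
  then have sum_M: "summable M" by (simp add: sums_iff)
  have "(\<Sum>k. M k)
      = dx * ((\<Sum>k. weight 2 k * \<bar>hu p k\<bar>) + (\<Sum>k. weight 2 k * \<bar>hv p k\<bar>))
        + (\<Sum>k. weight 1 k * \<bar>hu p k - hu q k\<bar>) + (\<Sum>k. weight 1 k * \<bar>hv p k - hv q k\<bar>)"
    using M_sums by (simp add: sums_iff)
  also have "\<dots> \<le> dx * (wnorm 2 * l2_norm (hu p) + wnorm 2 * l2_norm (hv p))
        + wnorm 1 * l2_norm (\<lambda>k. hu p k - hu q k) + wnorm 1 * l2_norm (\<lambda>k. hv p k - hv q k)"
    using suminf_abs_mult_le_l2_norm[OF w2 u] suminf_abs_mult_le_l2_norm[OF w2 v]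
      suminf_abs_mult_le_l2_norm[OF w1 du] suminf_abs_mult_le_l2_norm[OF w1 dv]
    by (intro add_mono mult_left_mono) (simp_all add: dx_def wnorm_def)
  also have "\<dots> \<le> distH p q * (wnorm 2 * l2_norm (hu p) + wnorm 2 * l2_norm (hv p))
        + wnorm 1 * distH p q + wnorm 1 * distH p q"
    using abs_hx_diff_le_distH[OF p q] l2_norm_hu_diff_le_distH[OF p q] l2_norm_hv_diff_le_distH[OF p q]
      wnorm_nonneg[of 1] wnorm_nonneg[of 2] l2_norm_nonneg[OF u] l2_norm_nonneg[OF v]
    by (intro add_mono mult_right_mono mult_left_mono) (auto simp: dx_def)
  finally have bound: "(\<Sum>k. M k) \<le> (wnorm 2 * (l2_norm (hu p) + l2_norm (hv p)) + 2 * wnorm 1) * distH p q"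
    by (simp add: algebra_simps)
  have "hx (driftF a p) - hx (driftF a q) = (\<Sum>k. drift_term p k - drift_term q k)"
    unfolding hx_driftF using suminf_diff[OF summable_drift_term[OF p] summable_drift_term[OF q]] by simp
  also have "\<bar>\<dots>\<bar> \<le> (\<Sum>k. M k)"
    unfolding M_def dx_def using abs_drift_term_diff_le sum_M[unfolded M_def dx_def]
    by (intro norm_suminf_le[where 'a = real, unfolded real_norm_def]) auto
  finally show ?thesis using bound by linarith
qed

end

section \<open>Integrals over initial segments of the time axis\<close>

lemma integrable_continuous_atLeast:
  "continuous_on {0..} f \<Longrightarrow> (f :: real \<Rightarrow> real) integrable_on {0..r}"
  by (rule integrable_continuous_interval[OF continuous_on_subset]) auto

lemma abs_integral_le_integral:
  fixes f g :: "real \<Rightarrow> real"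
  assumes "continuous_on {0..} f" "continuous_on {0..} g" "\<And>s. 0 \<le> s \<Longrightarrow> \<bar>f s\<bar> \<le> g s"
  shows "\<bar>integral {0..r} f\<bar> \<le> integral {0..r} g"
  using integral_norm_bound_integral[OF integrable_continuous_atLeast[OF assms(1)]
      integrable_continuous_atLeast[OF assms(2)], of r] assms(3)
  by simp

lemma abs_integral_diff_lipschitz_le:
  fixes g x1 x2 :: "real \<Rightarrow> real"
  assumes g_cont: "continuous_on UNIV g" and g_lip: "\<And>s t. \<bar>g s - g t\<bar> \<le> \<bar>s - t\<bar>"
    and x1: "continuous_on {0..} x1" and x2: "continuous_on {0..} x2"
  shows "\<bar>integral {0..r} (\<lambda>s. c * g (n * x1 s)) - integral {0..r} (\<lambda>s. c * g (n * x2 s))\<bar>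
           \<le> \<bar>c * n\<bar> * integral {0..r} (\<lambda>s. \<bar>x1 s - x2 s\<bar>)"
proof -
  have cont: "continuous_on {0..} (\<lambda>s. c * g (n * x s))" if "continuous_on {0..} x" for x
    by (intro continuous_intros continuous_on_compose2[OF g_cont] that) auto
  have "integral {0..r} (\<lambda>s. c * g (n * x1 s)) - integral {0..r} (\<lambda>s. c * g (n * x2 s))
      = integral {0..r} (\<lambda>s. c * g (n * x1 s) - c * g (n * x2 s))"
    by (intro integral_diff[symmetric] integrable_continuous_atLeast cont x1 x2)
  also have "\<bar>\<dots>\<bar> \<le> integral {0..r} (\<lambda>s. \<bar>c * n\<bar> * \<bar>x1 s - x2 s\<bar>)"
  proof (rule abs_integral_le_integral)
    show "continuous_on {0..} (\<lambda>s. c * g (n * x1 s) - c * g (n * x2 s))"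
      by (intro continuous_intros cont x1 x2)
    show "continuous_on {0..} (\<lambda>s. \<bar>c * n\<bar> * \<bar>x1 s - x2 s\<bar>)"
      by (intro continuous_intros x1 x2)
    show "\<bar>c * g (n * x1 s) - c * g (n * x2 s)\<bar> \<le> \<bar>c * n\<bar> * \<bar>x1 s - x2 s\<bar>" for s
      using mult_left_mono[OF g_lip[of "n * x1 s" "n * x2 s"], of "\<bar>c\<bar>"]
      by (simp add: abs_mult flip: right_diff_distrib)
  qed
  finally show ?thesis by simp
qed

lemma gronwall_integral:
  fixes g :: "real \<Rightarrow> real"
  assumes cont: "continuous_on {0..T} g" and T: "0 \<le> T"
    and bound: "\<And>r. 0 \<le> r \<Longrightarrow> r \<le> T \<Longrightarrow> g r \<le> K * (c + integral {0..r} g)"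
  shows "c + integral {0..T} g \<le> c * exp (K * T)"
proof -
  define h where "h r = integral {0..r} g" for r
  have h_deriv: "(h has_real_derivative g r) (at r within {0..T})" if "r \<in> {0..T}" for r
    unfolding h_def[abs_def] by (rule integral_has_real_derivative[OF cont that])
  define \<phi> where "\<phi> r = (c + h r) * exp (- K * r)" for r
  have \<phi>_cont: "continuous_on {0..T} \<phi>"
    unfolding \<phi>_def by (intro continuous_intros DERIV_continuous_on[OF h_deriv])
  have \<phi>_deriv: "\<exists>y. (\<phi> has_real_derivative y) (at r) \<and> y \<le> 0" if r: "0 < r" "r < T" for r
  proof (intro exI conjI)
    have "(h has_real_derivative g r) (at r)"
      using h_deriv[of r] r at_within_interior[of r "{0..T}"] by simp
    then show "(\<phi> has_real_derivative exp (- K * r) * (g r - K * (c + h r))) (at r)"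
      unfolding \<phi>_def[abs_def]
      by (auto intro!: derivative_eq_intros simp: algebra_simps)
    show "exp (- K * r) * (g r - K * (c + h r)) \<le> 0"
      using bound[of r] r by (intro mult_nonneg_nonpos) (auto simp: h_def)
  qed
  have "\<phi> T \<le> \<phi> 0"
    by (rule DERIV_nonpos_imp_decreasing_open[OF T \<phi>_deriv \<phi>_cont])
  then have "(c + h T) * exp (- K * T) * exp (K * T) \<le> c * exp (K * T)"
    by (simp add: \<phi>_def h_def)
  then show ?thesis
    by (simp add: h_def mult.assoc flip: exp_add)
qed

section \<open>Solutions along a fixed Brownian path\<close>

definition pathwise_solution :: "(nat \<Rightarrow> real) \<Rightarrow> (real \<Rightarrow> real) \<Rightarrow> H \<Rightarrow> (real \<Rightarrow> H) \<Rightarrow> bool" where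
  "pathwise_solution a w z p \<longleftrightarrow> (\<forall>s\<ge>0. inH (p s)) \<and> path_contH p \<and>
     (\<forall>t\<ge>0.
        hx (p t) = hx z + integral {0..t} (\<lambda>s. hx (driftF a (p s))) + w t \<and>
        (\<forall>k. hu (p t) k = hu z k + integral {0..t} (\<lambda>s. hu (driftF a (p s)) k)) \<and>
        (\<forall>k. hv (p t) k = hv z k + integral {0..t} (\<lambda>s. hv (driftF a (p s)) k)))"

lemma AE_pathwise_solution:
  assumes "strong_solution M \<beta> a z Y"
  shows "AE \<omega> in M. pathwise_solution a (\<lambda>t. \<beta> t \<omega>) z (\<lambda>t. Y t \<omega>)"
proof -
  have inH: "\<And>t \<omega>. 0 \<le> t \<Longrightarrow> \<omega> \<in> space M \<Longrightarrow> inH (Y t \<omega>)"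
    using assms by (simp add: strong_solution_def)
  show ?thesis
    using AE_space assms[unfolded strong_solution_def, THEN conjunct2, THEN conjunct2]
    by eventually_elim (simp add: pathwise_solution_def inH)
qed

lemma continuous_on_path_comp:
  fixes f :: "H \<Rightarrow> real"
  assumes p: "path_contH p" and inH: "\<And>s. 0 \<le> s \<Longrightarrow> inH (p s)"
    and lip: "\<And>t. 0 \<le> t \<Longrightarrow> \<exists>L. \<forall>s\<ge>0. \<bar>f (p s) - f (p t)\<bar> \<le> L * distH (p s) (p t)"
  shows "continuous_on {0..} (\<lambda>s. f (p s))"
  unfolding continuous_on_iff
proof (intro ballI allI impI)
  fix t e :: real assume t: "t \<in> {0..}" and e: "0 < e"
  obtain L where L: "\<And>s. 0 \<le> s \<Longrightarrow> \<bar>f (p s) - f (p t)\<bar> \<le> L * distH (p s) (p t)"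
    using lip t by auto
  define L' where "L' = \<bar>L\<bar> + 1"
  have L': "0 < L'" by (simp add: L'_def)
  have "0 < e / L'" using e L' by simp
  then obtain d where d: "0 < d" "\<And>s. 0 \<le> s \<Longrightarrow> \<bar>s - t\<bar> < d \<Longrightarrow> distH (p s) (p t) < e / L'"
    using p[unfolded path_contH_def, rule_format, of t "e / L'"] t by auto
  have "dist (f (p s)) (f (p t)) < e" if s: "s \<in> {0..}" "dist s t < d" for s
  proof -
    have "\<bar>f (p s) - f (p t)\<bar> \<le> L * distH (p s) (p t)"
      using L[of s] s by simp
    also have "\<dots> \<le> L' * distH (p s) (p t)"
      using s t inH by (intro mult_right_mono distH_nonneg) (auto simp: L'_def)
    also have "\<dots> < L' * (e / L')"
      using d(2)[of s] s L' by (intro mult_strict_left_mono) (auto simp: dist_real_def)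
    finally show ?thesis using L' by (simp add: dist_real_def)
  qed
  with d(1) show "\<exists>d>0. \<forall>s\<in>{0..}. dist s t < d \<longrightarrow> dist (f (p s)) (f (p t)) < e"
    by blast
qed

lemma pathwise_solution_inH: "pathwise_solution a w z p \<Longrightarrow> 0 \<le> s \<Longrightarrow> inH (p s)"
  by (simp add: pathwise_solution_def)

lemma
  assumes "pathwise_solution a w z p" "0 \<le> t"
  shows hx_solution: "hx (p t) = hx z + integral {0..t} (\<lambda>s. hx (driftF a (p s))) + w t"
    and hu_solution: "hu (p t) k = hu z k + integral {0..t} (\<lambda>s. sqrt (a k) * cos (real (Suc k) * hx (p s)))"
    and hv_solution: "hv (p t) k = hv z k + integral {0..t} (\<lambda>s. - sqrt (a k) * sin (real (Suc k) * hx (p s)))"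
  using assms by (simp_all add: pathwise_solution_def hu_driftF hv_driftF)

lemma continuous_on_hx_solution:
  assumes "pathwise_solution a w z p"
  shows "continuous_on {0..} (\<lambda>s. hx (p s))"
proof (rule continuous_on_path_comp[where f = fst and p = p])
  show "path_contH p" and inH: "\<And>s. 0 \<le> s \<Longrightarrow> inH (p s)"
    using assms by (simp_all add: pathwise_solution_def)
  show "\<exists>L. \<forall>s\<ge>0. \<bar>hx (p s) - hx (p t)\<bar> \<le> L * distH (p s) (p t)" if "0 \<le> t" for t
    by (rule exI[of _ 1]) (simp add: abs_hx_diff_le_distH inH that)
qed

context drift_coeffs
begin

lemma continuous_on_drift_solution:
  assumes "pathwise_solution a w z p"
  shows "continuous_on {0..} (\<lambda>s. hx (driftF a (p s)))"
proof (rule continuous_on_path_comp[where f = "\<lambda>q. hx (driftF a q)" and p = p])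
  show "path_contH p" and inH: "\<And>s. 0 \<le> s \<Longrightarrow> inH (p s)"
    using assms by (simp_all add: pathwise_solution_def)
  show "\<exists>L. \<forall>s\<ge>0. \<bar>hx (driftF a (p s)) - hx (driftF a (p t))\<bar> \<le> L * distH (p s) (p t)"
    if "0 \<le> t" for t
    using abs_hx_driftF_diff_le[OF inH[OF that] inH] by (metis abs_minus_commute distH_commute)
qed

lemma
  assumes sol: "pathwise_solution a w z p" and z: "inH z" and r: "0 \<le> r"
  shows l2_norm_hu_solution_le: "l2_norm (hu (p r)) \<le> l2_norm (hu z) + r * wnorm 0"
    and l2_norm_hv_solution_le: "l2_norm (hv (p r)) \<le> l2_norm (hv z) + r * wnorm 0"
proof -
  have integral_le: "\<bar>integral {0..r} (\<lambda>s. c * g (real (Suc k) * hx (p s)))\<bar> \<le> \<bar>r * weight 0 k\<bar>"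
    if g: "g = sin \<or> g = cos" and c: "c = sqrt (a k) \<or> c = - sqrt (a k)" for g c k
  proof -
    have "continuous_on {0..r} (\<lambda>s. c * g (real (Suc k) * hx (p s)))"
      using g continuous_on_subset[OF continuous_on_hx_solution[OF sol], of "{0..r}"]
      by (auto intro!: continuous_intros)
    moreover have "\<bar>c * g x\<bar> \<le> sqrt (a k)" for x
      using g c nonneg[of k] by (auto simp: abs_mult intro!: mult_left_le)
    ultimately have "norm (integral {0..r} (\<lambda>s. c * g (real (Suc k) * hx (p s)))) \<le> sqrt (a k) * (r - 0)"
      using r by (intro integral_bound) auto
    then show ?thesis
      using r nonneg[of k] by (simp add: weight_def abs_mult mult.commute)
  qed
  have "in_l2 (\<lambda>k. r * weight 0 k)" and norm: "l2_norm (\<lambda>k. r * weight 0 k) = r * wnorm 0"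
    using in_l2_cmult in_l2_weight l2_norm_cmult r by (auto simp: wnorm_def)
  moreover have "in_l2 (hu z)" "in_l2 (hv z)"
    using z by (simp_all add: inH_def)
  moreover have "\<bar>hu (p r) k\<bar> \<le> \<bar>hu z k\<bar> + \<bar>r * weight 0 k\<bar>"
    and "\<bar>hv (p r) k\<bar> \<le> \<bar>hv z k\<bar> + \<bar>r * weight 0 k\<bar>" for k
    unfolding hu_solution[OF sol r] hv_solution[OF sol r]
    using integral_le[of cos "sqrt (a k)" k] integral_le[of sin "- sqrt (a k)" k]
    by (auto intro: order_trans[OF abs_triangle_ineq])
  ultimately show "l2_norm (hu (p r)) \<le> l2_norm (hu z) + r * wnorm 0"
    and "l2_norm (hv (p r)) \<le> l2_norm (hv z) + r * wnorm 0"
    by (metis l2_norm_dominated)+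
qed

lemma hx_solution_diff:
  assumes sol1: "pathwise_solution a w z1 p1" and sol2: "pathwise_solution a w z2 p2" and r: "0 \<le> r"
  shows "hx (p1 r) - hx (p2 r)
           = hx z1 - hx z2 + integral {0..r} (\<lambda>s. hx (driftF a (p1 s)) - hx (driftF a (p2 s)))"
  using hx_solution[OF sol1 r] hx_solution[OF sol2 r]
    integral_diff[OF integrable_continuous_atLeast integrable_continuous_atLeast,
      OF continuous_on_drift_solution[OF sol1] continuous_on_drift_solution[OF sol2]]
  by simp

lemma
  assumes sol1: "pathwise_solution a w z1 p1" and sol2: "pathwise_solution a w z2 p2"
    and z1: "inH z1" and z2: "inH z2" and r: "0 \<le> r"
  shows l2_norm_hu_solution_diff_le: "l2_norm (\<lambda>k. hu (p1 r) k - hu (p2 r) k)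
      \<le> l2_norm (\<lambda>k. hu z1 k - hu z2 k) + wnorm 1 * integral {0..r} (\<lambda>s. \<bar>hx (p1 s) - hx (p2 s)\<bar>)"
    and l2_norm_hv_solution_diff_le: "l2_norm (\<lambda>k. hv (p1 r) k - hv (p2 r) k)
      \<le> l2_norm (\<lambda>k. hv z1 k - hv z2 k) + wnorm 1 * integral {0..r} (\<lambda>s. \<bar>hx (p1 s) - hx (p2 s)\<bar>)"
proof -
  define I where "I = integral {0..r} (\<lambda>s. \<bar>hx (p1 s) - hx (p2 s)\<bar>)"
  note x1 = continuous_on_hx_solution[OF sol1] and x2 = continuous_on_hx_solution[OF sol2]
  have "0 \<le> I"
    unfolding I_def by (intro integral_nonneg integrable_continuous_atLeast continuous_intros x1 x2) simp
  then have in_l2_I: "in_l2 (\<lambda>k. I * weight 1 k)" and norm: "l2_norm (\<lambda>k. I * weight 1 k) = wnorm 1 * I"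
    using in_l2_cmult in_l2_weight l2_norm_cmult by (auto simp: wnorm_def)
  have integral_diff_le: "\<bar>integral {0..r} (\<lambda>s. c * g (real (Suc k) * hx (p1 s)))
        - integral {0..r} (\<lambda>s. c * g (real (Suc k) * hx (p2 s)))\<bar> \<le> \<bar>I * weight 1 k\<bar>"
    if g: "g = sin \<or> g = cos" and c: "c = sqrt (a k) \<or> c = - sqrt (a k)" for g c k
  proof -
    have "continuous_on UNIV g" "\<And>s t. \<bar>g s - g t\<bar> \<le> \<bar>s - t\<bar>"
      using g abs_sin_diff_le abs_cos_diff_le by (auto intro: continuous_intros)
    from abs_integral_diff_lipschitz_le[OF this x1 x2, of r c "real (Suc k)"]
    have "\<bar>integral {0..r} (\<lambda>s. c * g (real (Suc k) * hx (p1 s)))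
        - integral {0..r} (\<lambda>s. c * g (real (Suc k) * hx (p2 s)))\<bar> \<le> \<bar>c * real (Suc k)\<bar> * I"
      unfolding I_def .
    moreover have "\<bar>c * real (Suc k)\<bar> * I = \<bar>I * weight 1 k\<bar>"
      using c \<open>0 \<le> I\<close> by (auto simp: weight_def abs_mult)
    ultimately show ?thesis by simp
  qed
  have bound_u: "\<bar>hu (p1 r) k - hu (p2 r) k\<bar> \<le> \<bar>hu z1 k - hu z2 k\<bar> + \<bar>I * weight 1 k\<bar>"
    and bound_v: "\<bar>hv (p1 r) k - hv (p2 r) k\<bar> \<le> \<bar>hv z1 k - hv z2 k\<bar> + \<bar>I * weight 1 k\<bar>" for k
    unfolding hu_solution[OF sol1 r] hu_solution[OF sol2 r] hv_solution[OF sol1 r] hv_solution[OF sol2 r]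
    using integral_diff_le[of cos "sqrt (a k)" k] integral_diff_le[of sin "- sqrt (a k)" k]
    by (auto simp: algebra_simps intro: order_trans[OF abs_triangle_ineq])
  show "l2_norm (\<lambda>k. hu (p1 r) k - hu (p2 r) k)
      \<le> l2_norm (\<lambda>k. hu z1 k - hu z2 k) + wnorm 1 * I"
    using l2_norm_dominated[OF in_l2_hu_diff[OF z1 z2] in_l2_I bound_u] norm by linarith
  show "l2_norm (\<lambda>k. hv (p1 r) k - hv (p2 r) k)
      \<le> l2_norm (\<lambda>k. hv z1 k - hv z2 k) + wnorm 1 * I"
    using l2_norm_dominated[OF in_l2_hv_diff[OF z1 z2] in_l2_I bound_v] norm by linarith
qed

lemma distH_solutions_le:
  assumes sol1: "pathwise_solution a w z1 p1" and sol2: "pathwise_solution a w z2 p2"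
    and z1: "inH z1" and z2: "inH z2" and r: "0 \<le> r" "r \<le> T"
  shows "distH (p1 r) (p2 r) \<le> (3 + 2 * wnorm 1 * T) *
           (distH z1 z2 + integral {0..r} (\<lambda>s. \<bar>hx (driftF a (p1 s)) - hx (driftF a (p2 s))\<bar>))"
proof -
  define d0 where "d0 = distH z1 z2"
  define g where "g s = \<bar>hx (driftF a (p1 s)) - hx (driftF a (p2 s))\<bar>" for s
  define h where "h r = integral {0..r} g" for r
  have g_cont: "continuous_on {0..} g"
    unfolding g_def using sol1 sol2 by (intro continuous_intros continuous_on_drift_solution)
  have x_cont: "continuous_on {0..} (\<lambda>s. \<bar>hx (p1 s) - hx (p2 s)\<bar>)"
    using sol1 sol2 by (intro continuous_intros continuous_on_hx_solution)
  have "0 \<le> d0" using z1 z2 by (simp add: d0_def distH_nonneg)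
  have h_mono: "h s \<le> h r" if "0 \<le> s" "s \<le> r" for s r
    unfolding h_def using that g_cont
    by (intro integral_subset_le integrable_continuous_atLeast) (auto simp: g_def)
  have "0 \<le> h r" using h_mono[of 0 r] r by (simp add: h_def)
  have x_bound: "\<bar>hx (p1 s) - hx (p2 s)\<bar> \<le> d0 + h r" if "0 \<le> s" "s \<le> r" for s
  proof -
    have "\<bar>hx (p1 s) - hx (p2 s)\<bar> \<le> \<bar>hx z1 - hx z2\<bar> + h s"
      unfolding hx_solution_diff[OF sol1 sol2 \<open>0 \<le> s\<close>] h_def g_def
      using sol1 sol2
      by (intro order_trans[OF abs_triangle_ineq] add_left_mono abs_integral_le_integral)
         (auto intro!: continuous_intros continuous_on_drift_solution)
    then show ?thesis
      using abs_hx_diff_le_distH[OF z1 z2] h_mono[OF that] by (simp add: d0_def)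
  qed
  have "norm (integral {0..r} (\<lambda>s. \<bar>hx (p1 s) - hx (p2 s)\<bar>)) \<le> (d0 + h r) * (r - 0)"
    using x_bound r continuous_on_subset[OF x_cont, of "{0..r}"] by (intro integral_bound) auto
  then have "integral {0..r} (\<lambda>s. \<bar>hx (p1 s) - hx (p2 s)\<bar>) \<le> (d0 + h r) * (r - 0)"
    by (auto dest: abs_le_D1)
  also have "\<dots> \<le> (d0 + h r) * T"
    using r \<open>0 \<le> d0\<close> \<open>0 \<le> h r\<close> by (intro mult_left_mono) auto
  finally have x_integral: "wnorm 1 * integral {0..r} (\<lambda>s. \<bar>hx (p1 s) - hx (p2 s)\<bar>) \<le> wnorm 1 * (T * (d0 + h r))"
    using wnorm_nonneg[of 1] by (intro mult_left_mono) (auto simp: mult.commute)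
  have "distH (p1 r) (p2 r) \<le> \<bar>hx (p1 r) - hx (p2 r)\<bar> + l2_norm (\<lambda>k. hu (p1 r) k - hu (p2 r) k)
                                 + l2_norm (\<lambda>k. hv (p1 r) k - hv (p2 r) k)"
    using distH_le_sum[OF pathwise_solution_inH[OF sol1 r(1)] pathwise_solution_inH[OF sol2 r(1)]] .
  also have "\<dots> \<le> (d0 + h r) + (d0 + wnorm 1 * (T * (d0 + h r))) + (d0 + wnorm 1 * (T * (d0 + h r)))"
    using x_bound[of r] r x_integral
      l2_norm_hu_solution_diff_le[OF sol1 sol2 z1 z2 r(1)] l2_norm_hv_solution_diff_le[OF sol1 sol2 z1 z2 r(1)]
      l2_norm_hu_diff_le_distH[OF z1 z2] l2_norm_hv_diff_le_distH[OF z1 z2] d0_def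
    by linarith
  also have "\<dots> \<le> (3 + 2 * wnorm 1 * T) * (d0 + h r)"
    using \<open>0 \<le> d0\<close> \<open>0 \<le> h r\<close> by (simp add: algebra_simps)
  finally show ?thesis by (simp add: d0_def h_def g_def[abs_def])
qed

lemma pathwise_solution_lipschitz_initial:
  assumes sol: "pathwise_solution a w z p" and z: "inH z" and T: "0 \<le> T"
  obtains C where "\<And>z' p'. inH z' \<Longrightarrow> pathwise_solution a w z' p' \<Longrightarrow> distH (p T) (p' T) \<le> C * distH z z'"
proof -
  define L where "L = wnorm 2 * (l2_norm (hu z) + l2_norm (hv z) + 2 * T * wnorm 0) + 2 * wnorm 1"
  define K where "K = L * (3 + 2 * wnorm 1 * T)"
  have "0 \<le> L"
    using z T wnorm_nonneg[of 0] wnorm_nonneg[of 1] wnorm_nonneg[of 2]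
    by (auto simp: L_def inH_def intro!: add_nonneg_nonneg mult_nonneg_nonneg l2_norm_nonneg)
  show ?thesis
  proof (rule that)
    fix z' p' assume z': "inH z'" and sol': "pathwise_solution a w z' p'"
    define g where "g s = \<bar>hx (driftF a (p s)) - hx (driftF a (p' s))\<bar>" for s
    have cont: "continuous_on {0..T} g"
      unfolding g_def
      by (rule continuous_on_subset[of "{0..}"]) (auto intro!: continuous_intros continuous_on_drift_solution sol sol')
    have bound: "g r \<le> K * (distH z z' + integral {0..r} g)" if r: "0 \<le> r" "r \<le> T" for r
    proof -
      have "l2_norm (hu (p r)) + l2_norm (hv (p r)) \<le> l2_norm (hu z) + l2_norm (hv z) + 2 * T * wnorm 0"
        using l2_norm_hu_solution_le[OF sol z r(1)] l2_norm_hv_solution_le[OF sol z r(1)]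
          mult_right_mono[OF r(2) wnorm_nonneg[of 0]] by simp
      then have coeff: "wnorm 2 * (l2_norm (hu (p r)) + l2_norm (hv (p r))) + 2 * wnorm 1 \<le> L"
        unfolding L_def using wnorm_nonneg[of 2] by (simp add: mult_left_mono)
      have "g r \<le> (wnorm 2 * (l2_norm (hu (p r)) + l2_norm (hv (p r))) + 2 * wnorm 1) * distH (p r) (p' r)"
        unfolding g_def
        by (intro abs_hx_driftF_diff_le pathwise_solution_inH[OF sol r(1)] pathwise_solution_inH[OF sol' r(1)])
      also have "\<dots> \<le> L * distH (p r) (p' r)"
        using coeff distH_nonneg[OF pathwise_solution_inH[OF sol r(1)] pathwise_solution_inH[OF sol' r(1)]]
        by (rule mult_right_mono)
      also have "\<dots> \<le> L * ((3 + 2 * wnorm 1 * T) * (distH z z' + integral {0..r} g))"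
        unfolding g_def using distH_solutions_le[OF sol sol' z z' r] \<open>0 \<le> L\<close> by (rule mult_left_mono)
      finally show ?thesis by (simp add: K_def)
    qed
    have gronwall: "distH z z' + integral {0..T} g \<le> distH z z' * exp (K * T)"
      by (rule gronwall_integral[OF cont T bound])
    have "distH (p T) (p' T) \<le> (3 + 2 * wnorm 1 * T) * (distH z z' + integral {0..T} g)"
      unfolding g_def[abs_def] by (rule distH_solutions_le[OF sol sol' z z' T order_refl])
    also have "\<dots> \<le> (3 + 2 * wnorm 1 * T) * (distH z z' * exp (K * T))"
      using gronwall T wnorm_nonneg[of 1] by (intro mult_left_mono) auto
    finally show "distH (p T) (p' T) \<le> (3 + 2 * wnorm 1 * T) * exp (K * T) * distH z z'"
      by (simp add: mult_ac)
  qed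
qed

lemma AE_tendsto_distH_solutions:
  fixes Y :: "H \<Rightarrow> real \<Rightarrow> 'w \<Rightarrow> H"
  assumes sol: "\<And>z. inH z \<Longrightarrow> strong_solution M \<beta> a z (Y z)"
    and zs: "\<And>k. inH (zs k)" and z: "inH z" and conv: "(\<lambda>k. distH (zs k) z) \<longlonglongrightarrow> 0"
    and t: "0 \<le> t"
  shows "AE \<omega> in M. (\<lambda>k. distH (Y (zs k) t \<omega>) (Y z t \<omega>)) \<longlonglongrightarrow> 0"
proof -
  have "AE \<omega> in M. (\<forall>k. pathwise_solution a (\<lambda>t. \<beta> t \<omega>) (zs k) (\<lambda>t. Y (zs k) t \<omega>))
                   \<and> pathwise_solution a (\<lambda>t. \<beta> t \<omega>) z (\<lambda>t. Y z t \<omega>)"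
    using AE_pathwise_solution[OF sol[OF zs]] AE_pathwise_solution[OF sol[OF z]]
    by (simp add: AE_all_countable)
  then show ?thesis
  proof eventually_elim
    case (elim \<omega>)
    then obtain C where C: "\<And>z' p'. inH z' \<Longrightarrow> pathwise_solution a (\<lambda>t. \<beta> t \<omega>) z' p'
        \<Longrightarrow> distH (Y z t \<omega>) (p' t) \<le> C * distH z z'"
      using pathwise_solution_lipschitz_initial[OF _ z t] by blast
    have upper: "distH (Y (zs k) t \<omega>) (Y z t \<omega>) \<le> C * distH (zs k) z" for k
      using C[OF zs, of k "\<lambda>t. Y (zs k) t \<omega>"] elim
      by (simp only: distH_commute[of "Y (zs k) t \<omega>"] distH_commute[of "zs k"])
    have lower: "0 \<le> distH (Y (zs k) t \<omega>) (Y z t \<omega>)" for k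
      using elim t by (intro distH_nonneg pathwise_solution_inH) auto
    show ?case
      by (rule tendsto_sandwich[OF always_eventually always_eventually tendsto_const
            tendsto_mult_right_zero[OF conv, of C]]) (simp_all add: lower upper)
  qed
qed

end

section \<open>Continuity and measurability on H\<close>

lemma contH_imp_tendsto:
  assumes "contH \<phi>" "inH p" "\<And>n. inH (x n)" "(\<lambda>n. distH (x n) p) \<longlonglongrightarrow> 0"
  shows "(\<lambda>n. \<phi> (x n)) \<longlonglongrightarrow> \<phi> p"
proof (rule LIMSEQ_I)
  fix e :: real assume "0 < e"
  then obtain d where d: "0 < d" "\<And>y. inH y \<Longrightarrow> distH y p < d \<Longrightarrow> \<bar>\<phi> y - \<phi> p\<bar> < e"
    using assms(1,2) unfolding contH_def by blast
  obtain N where N: "\<And>n. N \<le> n \<Longrightarrow> norm (distH (x n) p - 0) < d"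
    using LIMSEQ_D[OF assms(4) d(1)] by blast
  have "norm (\<phi> (x n) - \<phi> p) < e" if "N \<le> n" for n
    using d(2)[OF assms(3)] N[OF that] by simp
  then show "\<exists>N. \<forall>n\<ge>N. norm (\<phi> (x n) - \<phi> p) < e" by blast
qed

lemma contH_if_tendsto:
  assumes "\<And>zs z. (\<And>k. inH (zs k)) \<Longrightarrow> inH z \<Longrightarrow> (\<lambda>k. distH (zs k) z) \<longlonglongrightarrow> 0
             \<Longrightarrow> (\<lambda>k. f (zs k)) \<longlonglongrightarrow> f z"
  shows "contH f"
  unfolding contH_def
proof (intro allI impI)
  fix z :: H and e :: real assume z: "inH z" and e: "0 < e"
  show "\<exists>d>0. \<forall>y'. inH y' \<and> distH y' z < d \<longrightarrow> \<bar>f y' - f z\<bar> < e"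
  proof (rule ccontr)
    assume "\<not> ?thesis"
    then have "\<forall>k. \<exists>y'. inH y' \<and> distH y' z < inverse (real (Suc k)) \<and> \<not> \<bar>f y' - f z\<bar> < e"
      by (metis inverse_positive_iff_positive of_nat_0_less_iff zero_less_Suc)
    then obtain zs where zs: "\<And>k. inH (zs k)" "\<And>k. distH (zs k) z < inverse (real (Suc k))"
      "\<And>k. \<not> \<bar>f (zs k) - f z\<bar> < e"
      by metis
    have "(\<lambda>k. distH (zs k) z) \<longlonglongrightarrow> 0"
      by (rule tendsto_sandwich[OF always_eventually always_eventually tendsto_const LIMSEQ_inverse_real_of_nat])
         (use zs(2) distH_nonneg[OF zs(1) z] in \<open>auto intro: less_imp_le\<close>)
    then have "(\<lambda>k. f (zs k)) \<longlonglongrightarrow> f z"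
      using assms[of zs z] zs(1) z by blast
    then obtain N where "\<And>k. N \<le> k \<Longrightarrow> norm (f (zs k) - f z) < e"
      using LIMSEQ_D[OF _ e] by blast
    then show False using zs(3)[of N] by simp
  qed
qed

definition truncate :: "nat \<Rightarrow> H \<Rightarrow> H" where
  "truncate N p = (hx p, (\<lambda>k. if k < N then hu p k else 0), (\<lambda>k. if k < N then hv p k else 0))"

lemma inH_truncate: "inH (truncate N p)"
  unfolding inH_def in_l2_def truncate_def
  by (intro conjI summable_finite[of "{..<N}"]) auto

lemma suminf_if_lessThan: "(\<Sum>k. if k < N then f k else (0::real)) = (\<Sum>k<N. f k)"
  by (subst suminf_finite[of "{..<N}"]) auto

lemma distH_truncate: "distH (truncate N p) (truncate N q) =
   sqrt ((hx p - hx q)\<^sup>2 + (\<Sum>k<N. (hu p k - hu q k)\<^sup>2) + (\<Sum>k<N. (hv p k - hv q k)\<^sup>2))"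
proof -
  have "(\<lambda>k. ((if k < N then f k else 0) - (if k < N then g k else 0))\<^sup>2)
      = (\<lambda>k. if k < N then (f k - g k)\<^sup>2 else 0)" for f g :: "nat \<Rightarrow> real"
    by auto
  then show ?thesis
    unfolding distH_def truncate_def by (simp add: suminf_if_lessThan)
qed

lemma tendsto_suminf_tail:
  fixes f :: "nat \<Rightarrow> real"
  assumes "summable f"
  shows "(\<lambda>N. \<Sum>k. if k < N then 0 else f k) \<longlonglongrightarrow> 0"
proof -
  have "(\<Sum>k. if k < N then 0 else f k) = suminf f - (\<Sum>k<N. f k)" for N
  proof -
    have "(\<lambda>k. if k < N then 0 else f k) = (\<lambda>k. f k - (if k < N then f k else 0))"
      by auto
    moreover have "summable (\<lambda>k. if k < N then f k else 0)"
      by (rule summable_finite[of "{..<N}"]) auto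
    ultimately show ?thesis
      using suminf_diff[OF assms] suminf_if_lessThan[of N f] by metis
  qed
  moreover have "(\<lambda>N. suminf f - (\<Sum>k<N. f k)) \<longlonglongrightarrow> suminf f - suminf f"
    by (intro tendsto_diff tendsto_const summable_LIMSEQ[OF assms])
  ultimately show ?thesis by simp
qed

lemma tendsto_distH_truncate:
  assumes "inH p" shows "(\<lambda>N. distH (truncate N p) p) \<longlonglongrightarrow> 0"
proof -
  have "(\<lambda>k. ((if k < N then f k else 0) - f k)\<^sup>2) = (\<lambda>k. if k < N then 0 else (f k)\<^sup>2)"
    for N and f :: "nat \<Rightarrow> real"
    by auto
  then have "distH (truncate N p) p
      = sqrt ((\<Sum>k. if k < N then 0 else (hu p k)\<^sup>2) + (\<Sum>k. if k < N then 0 else (hv p k)\<^sup>2))" for N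
    unfolding distH_def truncate_def by simp
  moreover have "(\<lambda>N. sqrt ((\<Sum>k. if k < N then 0 else (hu p k)\<^sup>2) + (\<Sum>k. if k < N then 0 else (hv p k)\<^sup>2)))
      \<longlonglongrightarrow> sqrt (0 + 0)"
    using assms unfolding inH_def in_l2_def by (intro tendsto_real_sqrt tendsto_add tendsto_suminf_tail) auto
  ultimately show ?thesis by simp
qed

lemma continuous_on_comp_truncate:
  assumes "contH \<phi>"
  shows "continuous_on UNIV (\<lambda>p. \<phi> (truncate N p))"
  unfolding continuous_on_sequentially
proof (intro allI ballI impI)
  fix x :: "nat \<Rightarrow> H" and p :: H
  assume "(\<forall>n. x n \<in> UNIV) \<and> x \<longlonglongrightarrow> p"
  then have x: "x \<longlonglongrightarrow> p" by simp
  have coordinates: "continuous_on UNIV (\<lambda>q::H. hu q k)" "continuous_on UNIV (\<lambda>q::H. hv q k)" for k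
    by (rule continuous_on_compose2[OF continuous_on_product_coordinates], (intro continuous_intros), simp)+
  define F where "F q = sqrt ((hx q - hx p)\<^sup>2 + (\<Sum>k<N. (hu q k - hu p k)\<^sup>2)
                               + (\<Sum>k<N. (hv q k - hv p k)\<^sup>2))" for q :: H
  have "continuous_on UNIV F"
    unfolding F_def by (intro continuous_intros coordinates)
  then have "(\<lambda>n. F (x n)) \<longlonglongrightarrow> F p"
    by (rule continuous_on_tendsto_compose[OF _ x]) auto
  then have "(\<lambda>n. distH (truncate N (x n)) (truncate N p)) \<longlonglongrightarrow> 0"
    by (simp add: distH_truncate F_def)
  then show "((\<lambda>p. \<phi> (truncate N p)) \<circ> x) \<longlonglongrightarrow> \<phi> (truncate N p)"
    using contH_imp_tendsto[OF assms inH_truncate inH_truncate] by (simp add: comp_def)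
qed

lemma borel_measurable_H:
  fixes f :: "'w \<Rightarrow> H"
  assumes "(\<lambda>\<omega>. hx (f \<omega>)) \<in> borel_measurable M"
    and "\<And>k. (\<lambda>\<omega>. hu (f \<omega>) k) \<in> borel_measurable M"
    and "\<And>k. (\<lambda>\<omega>. hv (f \<omega>) k) \<in> borel_measurable M"
  shows "f \<in> borel_measurable M"
proof -
  have "(\<lambda>\<omega>. hu (f \<omega>)) \<in> borel_measurable M" "(\<lambda>\<omega>. hv (f \<omega>)) \<in> borel_measurable M"
    by (rule measurable_coordinatewise_then_product, rule assms)+
  then have "(\<lambda>\<omega>. (hx (f \<omega>), hu (f \<omega>), hv (f \<omega>))) \<in> borel_measurable M"
    using assms(1) by (intro borel_measurable_Pair)
  then show ?thesis by simp
qed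

text \<open>A function continuous for distH need not be continuous for the product topology of H, so it
  is approximated by its compositions with the (product-continuous) truncations.\<close>
lemma borel_measurable_comp_contH:
  fixes f :: "'w \<Rightarrow> H"
  assumes "contH \<phi>" "f \<in> borel_measurable M" "\<And>\<omega>. \<omega> \<in> space M \<Longrightarrow> inH (f \<omega>)"
  shows "(\<lambda>\<omega>. \<phi> (f \<omega>)) \<in> borel_measurable M"
proof (rule borel_measurable_LIMSEQ_real[where u = "\<lambda>N \<omega>. \<phi> (truncate N (f \<omega>))"])
  show "(\<lambda>N. \<phi> (truncate N (f \<omega>))) \<longlonglongrightarrow> \<phi> (f \<omega>)" if "\<omega> \<in> space M" for \<omega>
    using assms(3)[OF that] by (intro contH_imp_tendsto assms(1) inH_truncate tendsto_distH_truncate)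
  show "(\<lambda>\<omega>. \<phi> (truncate N (f \<omega>))) \<in> borel_measurable M" for N
    using measurable_compose[OF assms(2) borel_measurable_continuous_onI[OF continuous_on_comp_truncate[OF assms(1)]]]
    by simp
qed

lemma
  fixes X :: "H \<Rightarrow> 'w \<Rightarrow> H"
  assumes M: "prob_space M"
    and meas: "\<And>z. inH z \<Longrightarrow> X z \<in> borel_measurable M"
    and inH: "\<And>z \<omega>. inH z \<Longrightarrow> \<omega> \<in> space M \<Longrightarrow> inH (X z \<omega>)"
    and AE_tendsto: "\<And>zs z. (\<And>k. inH (zs k)) \<Longrightarrow> inH z \<Longrightarrow> (\<lambda>k. distH (zs k) z) \<longlonglongrightarrow> 0
                       \<Longrightarrow> AE \<omega> in M. (\<lambda>k. distH (X (zs k) \<omega>) (X z \<omega>)) \<longlonglongrightarrow> 0"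
    and \<phi>: "contH \<phi>" "boundedH \<phi>"
  shows contH_expectation: "contH (\<lambda>z. integral\<^sup>L M (\<lambda>\<omega>. \<phi> (X z \<omega>)))"
    and boundedH_expectation: "boundedH (\<lambda>z. integral\<^sup>L M (\<lambda>\<omega>. \<phi> (X z \<omega>)))"
proof -
  interpret prob_space M by (rule M)
  obtain B where B: "\<And>y. inH y \<Longrightarrow> \<bar>\<phi> y\<bar> \<le> B" using \<phi>(2) unfolding boundedH_def by blast
  have measurable: "(\<lambda>\<omega>. \<phi> (X z \<omega>)) \<in> borel_measurable M" if "inH z" for z
    using that by (intro borel_measurable_comp_contH \<phi>(1) meas inH)
  have bounded: "AE \<omega> in M. norm (\<phi> (X z \<omega>)) \<le> B" if "inH z" for z
    using that by (intro AE_I2) (simp add: B inH)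
  have "\<bar>integral\<^sup>L M (\<lambda>\<omega>. \<phi> (X z \<omega>))\<bar> \<le> B" if "inH z" for z
  proof -
    have "\<bar>integral\<^sup>L M (\<lambda>\<omega>. \<phi> (X z \<omega>))\<bar> \<le> integral\<^sup>L M (\<lambda>\<omega>. \<bar>\<phi> (X z \<omega>)\<bar>)"
      by (rule integral_abs_bound)
    also have "\<dots> \<le> B"
      using that bounded[OF that] measurable[OF that]
      by (intro integral_le_const integrable_const_bound[where B = B]) auto
    finally show ?thesis .
  qed
  then show "boundedH (\<lambda>z. integral\<^sup>L M (\<lambda>\<omega>. \<phi> (X z \<omega>)))"
    unfolding boundedH_def by blast
  show "contH (\<lambda>z. integral\<^sup>L M (\<lambda>\<omega>. \<phi> (X z \<omega>)))"
  proof (rule contH_if_tendsto)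
    fix zs z assume zs: "\<And>k. inH (zs k)" and z: "inH z" and conv: "(\<lambda>k. distH (zs k) z) \<longlonglongrightarrow> 0"
    have "AE \<omega> in M. (\<lambda>k. \<phi> (X (zs k) \<omega>)) \<longlonglongrightarrow> \<phi> (X z \<omega>)"
      using AE_tendsto[OF zs z conv] AE_space
      by eventually_elim (intro contH_imp_tendsto \<phi>(1) inH z zs)
    then show "(\<lambda>k. integral\<^sup>L M (\<lambda>\<omega>. \<phi> (X (zs k) \<omega>))) \<longlonglongrightarrow> integral\<^sup>L M (\<lambda>\<omega>. \<phi> (X z \<omega>))"
      by (intro integral_dominated_convergence[where w = "\<lambda>_. B"] measurable z zs bounded) auto
  qed
qed

context drift_coeffs
begin

lemma contH_boundedH_transition:
  fixes Y :: "H \<Rightarrow> real \<Rightarrow> 'w \<Rightarrow> H"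
  assumes M: "prob_space M" and sol: "\<And>z. inH z \<Longrightarrow> strong_solution M \<beta> a z (Y z)"
    and t: "0 \<le> t" and \<phi>: "contH \<phi>" "boundedH \<phi>"
  shows "contH (\<lambda>z. integral\<^sup>L M (\<lambda>\<omega>. \<phi> (Y z t \<omega>)))
       \<and> boundedH (\<lambda>z. integral\<^sup>L M (\<lambda>\<omega>. \<phi> (Y z t \<omega>)))"
proof -
  have measurable: "Y z t \<in> borel_measurable M" if "inH z" for z
    using sol[OF that] t by (intro borel_measurable_H) (simp_all add: strong_solution_def)
  have inH: "inH (Y z t \<omega>)" if "inH z" "\<omega> \<in> space M" for z \<omega>
    using sol[OF that(1)] t that(2) by (simp add: strong_solution_def)
  have AE: "AE \<omega> in M. (\<lambda>k. distH (Y (zs k) t \<omega>) (Y z t \<omega>)) \<longlonglongrightarrow> 0"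
    if "\<And>k. inH (zs k)" "inH z" "(\<lambda>k. distH (zs k) z) \<longlonglongrightarrow> 0" for zs z
    using AE_tendsto_distH_solutions[OF sol that t] .
  show ?thesis
    using contH_expectation[where X = "\<lambda>z. Y z t", OF M measurable inH AE \<phi>]
      boundedH_expectation[where X = "\<lambda>z. Y z t", OF M measurable inH AE \<phi>] by blast
qed

end

theorem proposition2:
  fixes M :: "'w measure"
    and \<beta> :: "real \<Rightarrow> 'w \<Rightarrow> real"
    and a :: "nat \<Rightarrow> real"
    and Y :: "H \<Rightarrow> real \<Rightarrow> 'w \<Rightarrow> H"
    and ys :: "nat \<Rightarrow> H"
    and y :: H
  assumes BM: "std_brownian_motion M \<beta>"
    and a_pos: "\<And>k. a k > 0"
    and a_sum: "summable (\<lambda>k. (1 + (real (Suc k))\<^sup>2) ^ 5 * (a k)\<^sup>2)"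
    and sol: "\<And>z. inH z \<Longrightarrow> strong_solution M \<beta> a z (Y z)"
    and ys_H: "\<And>k. inH (ys k)"
    and y_H: "inH y"
    and conv: "(\<lambda>k. distH (ys k) y) \<longlonglongrightarrow> 0"
  shows "(\<forall>t>0. AE \<omega> in M. (\<lambda>k. (distH (Y (ys k) t \<omega>) (Y y t \<omega>))\<^sup>2) \<longlonglongrightarrow> 0)
       \<and> (\<forall>t\<ge>0. \<forall>\<phi>. contH \<phi> \<and> boundedH \<phi> \<longrightarrow>
            contH (\<lambda>z. integral\<^sup>L M (\<lambda>\<omega>. \<phi> (Y z t \<omega>))) \<and>
            boundedH (\<lambda>z. integral\<^sup>L M (\<lambda>\<omega>. \<phi> (Y z t \<omega>))))"
proof -
  have a_nonneg: "\<And>k. 0 \<le> a k" using a_pos less_imp_le by blast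
  interpret drift_coeffs a
    by unfold_locales (fact a_nonneg, rule summable_pow4_mult_if_summable_weighted_squares[OF a_nonneg a_sum])
  have M: "prob_space M" using BM by (simp add: std_brownian_motion_def)
  show ?thesis
  proof (intro conjI allI impI)
    fix t :: real assume "0 < t"
    then have "AE \<omega> in M. (\<lambda>k. distH (Y (ys k) t \<omega>) (Y y t \<omega>)) \<longlonglongrightarrow> 0"
      using AE_tendsto_distH_solutions[OF sol ys_H y_H conv, of t] by simp
    then show "AE \<omega> in M. (\<lambda>k. (distH (Y (ys k) t \<omega>) (Y y t \<omega>))\<^sup>2) \<longlonglongrightarrow> 0"
      by eventually_elim (simp add: tendsto_power[where a = 0 and n = 2, simplified])
  qed (use contH_boundedH_transition[OF M sol] in blast)+
qed

end
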